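(* Let $q$ be a prime power and $b,k,r$ positive integers. Let $\boldsymbol{x}=(x^{(1)},x^{(2)})\in\mathbb{F}_q^{k+r}$ and $\boldsymbol{y}=(y^{(1)},y^{(2)})\in\mathbb{F}_q^{k+r}$ with $x^{(1)},y^{(1)}\in\mathbb{F}_q^k$ and $x^{(2)},y^{(2)}\in\mathbb{F}_q^r$. Then \[ d_b(x^{(1)},y^{(1)})+d_b(x^{(2)},y^{(2)})-(b-1)\le d_b(\boldsymbol{x},\boldsymbol{y})\le d_b(x^{(1)},y^{(1)})+d_b(x^{(2)},y^{(2)})+(b-1). \]
   Context: For $\boldsymbol{z}=(z_0,\ldots,z_{n-1})\in\mathbb{F}_q^n$, the $b$-symbol read vector is $\pi_b(\boldsymbol{z})=[(z_0,\ldots,z_{b-1}),(z_1,\ldots,z_b),\ldots,(z_{n-1},z_0,\ldots,z_{b-2})]$ with indices taken modulo $n$, and the $b$-symbol distance is $d_b(\boldsymbol{z},\boldsymbol{w})=d_H(\pi_b(\boldsymbol{z}),\pi_b(\boldsymbol{w}))$, the Hamming distance between the read vectors viewed as words over $\mathbb{F}_q^b$. The paper's standing assumption is $2<b<k$. *)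

theory Defs
  imports Main
begin

definition b_read :: "nat \<Rightarrow> 'a list \<Rightarrow> 'a list list" where
  "b_read b z = map (\<lambda>i. map (\<lambda>j. z ! ((i + j) mod length z)) [0..<b]) [0..<length z]"

definition hamming :: "'a list \<Rightarrow> 'a list \<Rightarrow> nat" where
  "hamming u v = card {i. i < length u \<and> u ! i \<noteq> v ! i}"

definition b_dist :: "nat \<Rightarrow> 'a list \<Rightarrow> 'a list \<Rightarrow> nat" where
  "b_dist b z w = hamming (b_read b z) (b_read b w)"

end

theory Submission
  imports Defs
begin

text \<open>
  Write \<open>D\<^sub>1\<close>, \<open>D\<^sub>2\<close> for the positions where \<open>x1\<close>, \<open>y1\<close> resp. \<open>x2\<close>, \<open>y2\<close> differ;
  each \<open>b\<close>-symbol distance counts the cyclic windows of length \<open>b\<close> that meet the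
  difference positions. A window of the concatenation lying inside one block meets the
  same positions as the corresponding window of that block, so the counts can only
  disagree on windows crossing the seam at \<open>k\<close> or the wrap-around seam at \<open>k + r\<close>, and
  at most \<open>b - 1\<close> windows cross a seam. A window at the first seam that is counted for
  the concatenation but not for \<open>x1\<close> forces some point of \<open>D\<^sub>2\<close> to lie before all of
  \<open>D\<^sub>1\<close>; at the second seam it forces the reverse. The same holds, with the roles
  exchanged, for windows counted only blockwise. So the discrepancies of either kind
  all sit at one seam.
\<close>

definition window_hits :: "nat \<Rightarrow> nat \<Rightarrow> (nat \<Rightarrow> bool) \<Rightarrow> nat \<Rightarrow> bool" where
  "window_hits n b D i \<longleftrightarrow> (\<exists>t<b. D ((i + t) mod n))"

definition window_count :: "nat \<Rightarrow> nat \<Rightarrow> (nat \<Rightarrow> bool) \<Rightarrow> nat" where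
  "window_count n b D = card {i. i < n \<and> window_hits n b D i}"

definition append_pred :: "nat \<Rightarrow> (nat \<Rightarrow> bool) \<Rightarrow> (nat \<Rightarrow> bool) \<Rightarrow> nat \<Rightarrow> bool" where
  "append_pred k D\<^sub>1 D\<^sub>2 p \<longleftrightarrow> (if p < k then D\<^sub>1 p else D\<^sub>2 (p - k))"

lemma b_dist_eq_window_count:
  assumes "length z = length w"
  shows "b_dist b z w = window_count (length z) b (\<lambda>p. z ! p \<noteq> w ! p)"
proof -
  have "b_read b z ! i \<noteq> b_read b w ! i \<longleftrightarrow> window_hits (length z) b (\<lambda>p. z ! p \<noteq> w ! p) i"
    if "i < length z" for i
    using that assms by (auto simp: b_read_def window_hits_def map_eq_conv)
  moreover have "length (b_read b z) = length z"
    by (simp add: b_read_def)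
  ultimately show ?thesis
    unfolding b_dist_def hamming_def window_count_def
    by (intro arg_cong[where f = card] Collect_cong) auto
qed

lemma differences_append:
  assumes "length x\<^sub>1 = length y\<^sub>1"
  shows "(\<lambda>p. (x\<^sub>1 @ x\<^sub>2) ! p \<noteq> (y\<^sub>1 @ y\<^sub>2) ! p)
    = append_pred (length x\<^sub>1) (\<lambda>p. x\<^sub>1 ! p \<noteq> y\<^sub>1 ! p) (\<lambda>p. x\<^sub>2 ! p \<noteq> y\<^sub>2 ! p)"
  using assms by (auto simp: append_pred_def nth_append)

lemma window_hits_shift:
  "window_hits n b D (i + s) = window_hits n b (\<lambda>p. D ((p + s) mod n)) i"
proof -
  have "((i + t) mod n + s) mod n = (i + s + t) mod n" for t
    by (simp add: mod_add_right_eq ac_simps)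
  then show ?thesis unfolding window_hits_def by (simp only:)
qed

lemma window_hits_cong:
  assumes "0 < n" "\<And>p. p < n \<Longrightarrow> D p = E p"
  shows "window_hits n b D i = window_hits n b E i"
  using assms by (simp add: window_hits_def)

lemma append_pred_rotate:
  assumes "p < r + k"
  shows "append_pred k D\<^sub>1 D\<^sub>2 ((p + k) mod (k + r)) = append_pred r D\<^sub>2 D\<^sub>1 p"
proof (cases "p < r")
  case True
  then show ?thesis by (simp add: append_pred_def)
next
  case False
  then have "(p + k) mod (k + r) = p - r" "p - r < k"
    using assms by (simp_all add: mod_if)
  then show ?thesis using False by (simp add: append_pred_def)
qed

lemma window_hits_append_pred_swap:
  assumes "0 < k + r"
  shows "window_hits (k + r) b (append_pred k D\<^sub>1 D\<^sub>2) (j + k)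
    = window_hits (r + k) b (append_pred r D\<^sub>2 D\<^sub>1) j"
proof -
  have "window_hits (k + r) b (append_pred k D\<^sub>1 D\<^sub>2) (j + k)
      = window_hits (k + r) b (\<lambda>p. append_pred k D\<^sub>1 D\<^sub>2 ((p + k) mod (k + r))) j"
    by (rule window_hits_shift)
  also have "\<dots> = window_hits (k + r) b (append_pred r D\<^sub>2 D\<^sub>1) j"
    using assms by (intro window_hits_cong) (simp_all add: append_pred_rotate)
  also have "\<dots> = window_hits (r + k) b (append_pred r D\<^sub>2 D\<^sub>1) j"
    by (simp only: add.commute)
  finally show ?thesis .
qed

lemma window_hits_append_pred_left:
  assumes "i + b \<le> k"
  shows "window_hits (k + r) b (append_pred k D\<^sub>1 D\<^sub>2) i = window_hits k b D\<^sub>1 i"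
  using assms by (auto simp: window_hits_def append_pred_def)

lemma window_hits_append_pred_right:
  assumes "k \<le> i" "i < k + r" "i + b \<le> k + r"
  shows "window_hits (k + r) b (append_pred k D\<^sub>1 D\<^sub>2) i = window_hits r b D\<^sub>2 (i - k)"
proof -
  have "window_hits (k + r) b (append_pred k D\<^sub>1 D\<^sub>2) i
      = window_hits (r + k) b (append_pred r D\<^sub>2 D\<^sub>1) (i - k)"
    using window_hits_append_pred_swap[of k r b D\<^sub>1 D\<^sub>2 "i - k"] assms by simp
  also have "\<dots> = window_hits r b D\<^sub>2 (i - k)"
    using assms by (intro window_hits_append_pred_left) simp
  finally show ?thesis .
qed

definition precedes :: "nat \<Rightarrow> (nat \<Rightarrow> bool) \<Rightarrow> nat \<Rightarrow> (nat \<Rightarrow> bool) \<Rightarrow> bool" where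
  "precedes m D n E \<longleftrightarrow> (\<exists>q<m. D q \<and> (\<forall>p<n. E p \<longrightarrow> q < p))"

lemma precedes_asym: "precedes m D n E \<Longrightarrow> \<not> precedes n E m D"
  unfolding precedes_def by (meson less_asym)

lemma precedes_if_hit_across_seam:
  assumes "i < k" "k < i + b"
    and joined: "window_hits (k + r) b (append_pred k D\<^sub>1 D\<^sub>2) i"
    and block: "\<not> window_hits k b D\<^sub>1 i"
  shows "precedes r D\<^sub>2 k D\<^sub>1"
proof -
  have no_D\<^sub>1: "\<not> D\<^sub>1 p" if "p < k" "i \<le> p \<or> p + k < i + b" for p
  proof
    assume "D\<^sub>1 p"
    obtain t where "t < b" "(i + t) mod k = p"
    proof (cases "i \<le> p")
      case True
      then show ?thesis using that[of "p - i"] \<open>p < k\<close> assms(2) by simp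
    next
      case False
      then show ?thesis using that[of "k + p - i"] \<open>p < k\<close> \<open>i \<le> p \<or> p + k < i + b\<close> assms(1) by simp
    qed
    then show False using block \<open>D\<^sub>1 p\<close> unfolding window_hits_def by blast
  qed
  obtain t where "t < b" and hit: "append_pred k D\<^sub>1 D\<^sub>2 ((i + t) mod (k + r))"
    using joined unfolding window_hits_def by blast
  define p where "p = (i + t) mod (k + r)"
  have "p \<le> i + t" "p < k + r"
    using assms(1) unfolding p_def by simp_all
  have "\<not> p < k"
  proof
    assume "p < k"
    have "i \<le> p \<or> p + k < i + b"
    proof (cases "i + t < k + r")
      case True
      then show ?thesis unfolding p_def by simp
    next
      case False
      then have "p = (i + t - (k + r)) mod (k + r)"
        unfolding p_def by (simp add: le_mod_geq)
      then have "p \<le> i + t - (k + r)"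
        by simp
      then show ?thesis using False \<open>t < b\<close> by arith
    qed
    then show False using no_D\<^sub>1 \<open>p < k\<close> hit[folded p_def] unfolding append_pred_def by auto
  qed
  then have "D\<^sub>2 (p - k)" "p - k < r" "p - k + k < i + b"
    using hit[folded p_def] \<open>p \<le> i + t\<close> \<open>p < k + r\<close> \<open>t < b\<close> unfolding append_pred_def by auto
  moreover have "p - k < q" if "q < k" "D\<^sub>1 q" for q
    using no_D\<^sub>1[OF that(1)] that(2) \<open>p - k + k < i + b\<close> by linarith
  ultimately show ?thesis
    unfolding precedes_def by blast
qed

lemma precedes_if_miss_across_seam:
  assumes "i < k" "k < i + b"
    and joined: "\<not> window_hits (k + r) b (append_pred k D\<^sub>1 D\<^sub>2) i"
    and block: "window_hits k b D\<^sub>1 i"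
  shows "precedes k D\<^sub>1 r D\<^sub>2"
proof -
  have no_D\<^sub>1: "\<not> D\<^sub>1 p" if "i \<le> p" "p < k" for p
  proof -
    have "(i + (p - i)) mod (k + r) = p" "p - i < b"
      using that assms(2) by simp_all
    then show ?thesis using joined \<open>p < k\<close> unfolding window_hits_def append_pred_def by force
  qed
  have no_D\<^sub>2: "\<not> D\<^sub>2 q" if "q < r" "q + k < i + b" for q
  proof -
    have "(i + (q + k - i)) mod (k + r) = q + k" "q + k - i < b"
      using that assms(1) by simp_all
    then show ?thesis using joined unfolding window_hits_def append_pred_def by force
  qed
  obtain t where "t < b" and hit: "D\<^sub>1 ((i + t) mod k)"
    using block unfolding window_hits_def by blast
  define p where "p = (i + t) mod k"
  have "p < k"
    using assms(1) unfolding p_def by simp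
  then have "p < i"
    using no_D\<^sub>1 hit[folded p_def] not_le by blast
  then have "k \<le> i + t"
    unfolding p_def by (cases "i + t < k") simp_all
  then have "p = (i + t - k) mod k"
    unfolding p_def by (simp add: le_mod_geq)
  then have "p \<le> i + t - k"
    by simp
  then have "p + k < i + b"
    using \<open>k \<le> i + t\<close> \<open>t < b\<close> by arith
  moreover have "p < q" if "q < r" "D\<^sub>2 q" for q
    using no_D\<^sub>2[OF that(1)] that(2) \<open>p + k < i + b\<close> by linarith
  ultimately show ?thesis
    unfolding precedes_def using \<open>p < k\<close> hit p_def by blast
qed

lemma card_crossing_windows: "card {i::nat. i < m \<and> m < i + b} \<le> b - 1"
proof -
  have "card {i::nat. i < m \<and> m < i + b} \<le> card {m - (b - 1)..<m}"
    by (intro card_mono) auto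
  then show ?thesis by simp
qed

lemma card_split_at:
  fixes k r :: nat
  shows "card {i. i < k + r \<and> (if i < k then P i else Q (i - k))}
    = card {i. i < k \<and> P i} + card {j. j < r \<and> Q j}"
proof -
  have "{i. i < k + r \<and> (if i < k then P i else Q (i - k))}
      = {i. i < k \<and> P i} \<union> (\<lambda>j. j + k) ` {j. j < r \<and> Q j}"
  proof (intro equalityI subsetI)
    fix i
    assume i: "i \<in> {i. i < k + r \<and> (if i < k then P i else Q (i - k))}"
    show "i \<in> {i. i < k \<and> P i} \<union> (\<lambda>j. j + k) ` {j. j < r \<and> Q j}"
    proof (cases "i < k")
      case False
      then have "i = (i - k) + k"
        by simp
      moreover have "i - k \<in> {j. j < r \<and> Q j}"
        using i False by auto
      ultimately show ?thesis
        by (intro UnI2 image_eqI)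
    qed (use i in simp)
  qed auto
  moreover have "card ((\<lambda>j. j + k) ` {j. j < r \<and> Q j}) = card {j. j < r \<and> Q j}"
    by (simp add: card_image)
  moreover have "card ({i. i < k \<and> P i} \<union> (\<lambda>j. j + k) ` {j. j < r \<and> Q j})
      = card {i. i < k \<and> P i} + card ((\<lambda>j. j + k) ` {j. j < r \<and> Q j})"
    by (rule card_Un_disjoint) (auto simp: finite_Collect_conjI)
  ultimately show ?thesis
    by simp
qed

lemma card_le_card_add_disagreements:
  fixes n :: nat
  shows "card {i. i < n \<and> P i} \<le> card {i. i < n \<and> Q i} + card {i. i < n \<and> P i \<and> \<not> Q i}"
proof -
  have "card {i. i < n \<and> P i} \<le> card ({i. i < n \<and> Q i} \<union> {i. i < n \<and> P i \<and> \<not> Q i})"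
    by (intro card_mono) (auto simp: finite_Collect_conjI)
  also have "\<dots> \<le> card {i. i < n \<and> Q i} + card {i. i < n \<and> P i \<and> \<not> Q i}"
    by (rule card_Un_le)
  finally show ?thesis .
qed

lemma card_disagreements_at_one_seam:
  fixes P Q :: "nat \<Rightarrow> bool" and k r :: nat
  assumes agree: "\<And>i. i < k + r \<Longrightarrow> i + b \<le> k \<or> k \<le> i \<and> i + b \<le> k + r \<Longrightarrow> P i = Q i"
    and one_seam: "\<And>i j. i < k \<Longrightarrow> k < i + b \<Longrightarrow> j < r \<Longrightarrow> r < j + b
      \<Longrightarrow> P i \<Longrightarrow> \<not> Q i \<Longrightarrow> P (j + k) \<Longrightarrow> \<not> Q (j + k) \<Longrightarrow> False"
  shows "card {i. i < k + r \<and> P i \<and> \<not> Q i} \<le> b - 1"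
proof -
  let ?X = "{i. i < k + r \<and> P i \<and> \<not> Q i}"
  have "?X \<subseteq> {i. i < k \<and> k < i + b} \<or> ?X \<subseteq> {i. i < k + r \<and> k + r < i + b}"
  proof (rule ccontr)
    assume "\<not> ?thesis"
    then obtain i i' where i: "i \<in> ?X" "\<not> (i < k \<and> k < i + b)"
      and i': "i' \<in> ?X" "\<not> (i' < k + r \<and> k + r < i' + b)"
      by blast
    have "\<not> (i + b \<le> k \<or> k \<le> i \<and> i + b \<le> k + r)"
      using i(1) agree[of i] by auto
    with i(2) have "k \<le> i" "k + r < i + b"
      by auto
    have "\<not> (i' + b \<le> k \<or> k \<le> i' \<and> i' + b \<le> k + r)"
      using i'(1) agree[of i'] by auto
    with i'(1,2) have "i' < k" "k < i' + b"
      by auto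
    moreover have "i - k < r" "r < i - k + b" "i - k + k = i"
      using i(1) \<open>k \<le> i\<close> \<open>k + r < i + b\<close> by auto
    ultimately show False
      using one_seam[of i' "i - k"] i(1) i'(1) by auto
  qed
  moreover have "card ?X \<le> b - 1" if "?X \<subseteq> {i. i < m \<and> m < i + b}" for m
    using card_mono[OF _ that] card_crossing_windows[of m b] by (simp add: finite_Collect_conjI)
  ultimately show ?thesis
    by blast
qed

definition blockwise_hits :: "nat \<Rightarrow> nat \<Rightarrow> nat \<Rightarrow> (nat \<Rightarrow> bool) \<Rightarrow> (nat \<Rightarrow> bool) \<Rightarrow> nat \<Rightarrow> bool" where
  "blockwise_hits k r b D\<^sub>1 D\<^sub>2 i \<longleftrightarrow> (if i < k then window_hits k b D\<^sub>1 i else window_hits r b D\<^sub>2 (i - k))"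

lemma card_blockwise_hits:
  "card {i. i < k + r \<and> blockwise_hits k r b D\<^sub>1 D\<^sub>2 i} = window_count k b D\<^sub>1 + window_count r b D\<^sub>2"
  unfolding blockwise_hits_def window_count_def by (rule card_split_at)

lemma window_hits_append_pred_eq_blockwise_hits:
  assumes "i < k + r" "i + b \<le> k \<or> k \<le> i \<and> i + b \<le> k + r"
  shows "window_hits (k + r) b (append_pred k D\<^sub>1 D\<^sub>2) i = blockwise_hits k r b D\<^sub>1 D\<^sub>2 i"
proof (cases "i < k")
  case True
  with assms have "i + b \<le> k" by auto
  then show ?thesis using True by (simp add: blockwise_hits_def window_hits_append_pred_left)
next
  case False
  with assms have "k \<le> i" "i + b \<le> k + r" by auto
  then show ?thesis using False \<open>i < k + r\<close> by (simp add: blockwise_hits_def window_hits_append_pred_right)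
qed

lemma card_excess_windows:
  "card {i. i < k + r \<and> window_hits (k + r) b (append_pred k D\<^sub>1 D\<^sub>2) i
      \<and> \<not> blockwise_hits k r b D\<^sub>1 D\<^sub>2 i} \<le> b - 1"
proof (rule card_disagreements_at_one_seam[OF window_hits_append_pred_eq_blockwise_hits])
  fix i j
  assume seam\<^sub>1: "i < k" "k < i + b" and seam\<^sub>2: "j < r" "r < j + b"
    and "window_hits (k + r) b (append_pred k D\<^sub>1 D\<^sub>2) i" "\<not> blockwise_hits k r b D\<^sub>1 D\<^sub>2 i"
    and "window_hits (k + r) b (append_pred k D\<^sub>1 D\<^sub>2) (j + k)" "\<not> blockwise_hits k r b D\<^sub>1 D\<^sub>2 (j + k)"
  then have "precedes r D\<^sub>2 k D\<^sub>1" "precedes k D\<^sub>1 r D\<^sub>2"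
    using precedes_if_hit_across_seam[OF seam\<^sub>1] precedes_if_hit_across_seam[OF seam\<^sub>2]
      window_hits_append_pred_swap[of k r b D\<^sub>1 D\<^sub>2 j]
    by (simp_all add: blockwise_hits_def)
  then show False
    using precedes_asym by blast
qed

lemma card_missing_windows:
  "card {i. i < k + r \<and> blockwise_hits k r b D\<^sub>1 D\<^sub>2 i
      \<and> \<not> window_hits (k + r) b (append_pred k D\<^sub>1 D\<^sub>2) i} \<le> b - 1"
proof (rule card_disagreements_at_one_seam[OF window_hits_append_pred_eq_blockwise_hits[symmetric]])
  fix i j
  assume seam\<^sub>1: "i < k" "k < i + b" and seam\<^sub>2: "j < r" "r < j + b"
    and "blockwise_hits k r b D\<^sub>1 D\<^sub>2 i" "\<not> window_hits (k + r) b (append_pred k D\<^sub>1 D\<^sub>2) i"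
    and "blockwise_hits k r b D\<^sub>1 D\<^sub>2 (j + k)" "\<not> window_hits (k + r) b (append_pred k D\<^sub>1 D\<^sub>2) (j + k)"
  then have "precedes k D\<^sub>1 r D\<^sub>2" "precedes r D\<^sub>2 k D\<^sub>1"
    using precedes_if_miss_across_seam[OF seam\<^sub>1] precedes_if_miss_across_seam[OF seam\<^sub>2]
      window_hits_append_pred_swap[of k r b D\<^sub>1 D\<^sub>2 j]
    by (simp_all add: blockwise_hits_def)
  then show False
    using precedes_asym by blast
qed

lemma window_count_append_pred:
  shows "window_count (k + r) b (append_pred k D\<^sub>1 D\<^sub>2)
      \<le> window_count k b D\<^sub>1 + window_count r b D\<^sub>2 + (b - 1)"
    and "window_count k b D\<^sub>1 + window_count r b D\<^sub>2
      \<le> window_count (k + r) b (append_pred k D\<^sub>1 D\<^sub>2) + (b - 1)"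
  using card_le_card_add_disagreements[of "k + r" "window_hits (k + r) b (append_pred k D\<^sub>1 D\<^sub>2)"
      "blockwise_hits k r b D\<^sub>1 D\<^sub>2"]
    card_le_card_add_disagreements[of "k + r" "blockwise_hits k r b D\<^sub>1 D\<^sub>2"
      "window_hits (k + r) b (append_pred k D\<^sub>1 D\<^sub>2)"]
    card_excess_windows[of k r b D\<^sub>1 D\<^sub>2] card_missing_windows[of k r b D\<^sub>1 D\<^sub>2]
    card_blockwise_hits[of k r b D\<^sub>1 D\<^sub>2]
  unfolding window_count_def by linarith+

theorem lemma3p1:
  fixes x1 y1 x2 y2 :: "'a::{field,finite} list" and b k r :: nat
  assumes "0 < b" "0 < k" "0 < r"
    and "length x1 = k" "length y1 = k" "length x2 = r" "length y2 = r"
  shows "int (b_dist b x1 y1) + int (b_dist b x2 y2) - (int b - 1)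
           \<le> int (b_dist b (x1 @ x2) (y1 @ y2))
       \<and> int (b_dist b (x1 @ x2) (y1 @ y2))
           \<le> int (b_dist b x1 y1) + int (b_dist b x2 y2) + (int b - 1)"
proof -
  define D\<^sub>1 where "D\<^sub>1 = (\<lambda>p. x1 ! p \<noteq> y1 ! p)"
  define D\<^sub>2 where "D\<^sub>2 = (\<lambda>p. x2 ! p \<noteq> y2 ! p)"
  have "b_dist b x1 y1 = window_count k b D\<^sub>1"
    using assms(4,5) b_dist_eq_window_count[of x1 y1 b] unfolding D\<^sub>1_def by simp
  moreover have "b_dist b x2 y2 = window_count r b D\<^sub>2"
    using assms(6,7) b_dist_eq_window_count[of x2 y2 b] unfolding D\<^sub>2_def by simp
  moreover have "b_dist b (x1 @ x2) (y1 @ y2) = window_count (k + r) b (append_pred k D\<^sub>1 D\<^sub>2)"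
    using assms(4-7) b_dist_eq_window_count[of "x1 @ x2" "y1 @ y2" b] differences_append[of x1 y1 x2 y2]
    unfolding D\<^sub>1_def D\<^sub>2_def by simp
  ultimately show ?thesis
    using window_count_append_pred[where D\<^sub>1 = D\<^sub>1 and D\<^sub>2 = D\<^sub>2 and k = k and r = r and b = b] \<open>0 < b\<close> by linarith
qed

end
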